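(* Let $\mathcal G$ be a core network with input nodes $\iota_1,\dots,\iota_n$ and output node $o$, and suppose $\mathcal K_j$ is a subnetwork of $\mathcal G$ such that (a) $\mathcal K_j$ is an $\mathcal A_{\mathcal G}$-path component, and (b) for every $m=1,\dots,n$ and every $\iota_mo$-simple path $S$, nodes in $\mathcal K_j$ are not $CS$-path equivalent to any node in $CS\setminus\mathcal K_j$. Then $\det(J_{\mathcal K_j})$ is an irreducible factor of $\det\langle H\rangle$.
   Context: Node $b$ is downstream from $a$ (and $a$ upstream from $b$) if there is a directed path from $a$ to $b$ (every node is up/downstream from itself). A core network: every node is upstream from $o$ and downstream from at least one input node. A simple path visits each node at most once; an $\iota_mo$-simple path is a simple path from $\iota_m$ to $o$. A node is $\iota_m$-simple if it lies on an $\iota_mo$-simple path, $\iota_m$-appendage if downstream from $\iota_m$ but not $\iota_m$-simple, absolutely appendage if $\iota_m$-appendage for all $m$. $\mathcal A_{\mathcal G}$: all absolutely appendage nodes with all arrows of $\mathcal G$ between them. For a subnetwork $\mathcal K$, nodes are $\mathcal K$-path equivalent if joined by paths within $\mathcal K$ in both directions; a $\mathcal K$-path component is an equivalence class. For an $\iota_mo$-simple path $S$, $CS$ is the subnetwork of nodes of $\mathcal G$ not on $S$ with all arrows between them. An admissible system has variables $x_j$ per node with $\dot x_{\iota_m}=f_{\iota_m}(X,\mathcal I)$, $\dot x_j=f_j(X)$ otherwise, $f_{j,x_\ell}\equiv0$ unless there is an arrow $\ell\to j$ (all nodes self-coupled), $f_{\iota_m,\mathcal I}\neq0$; these entries are treated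 as independent indeterminates, and irreducibility refers to the resulting polynomial ring. $J_{\mathcal K}=(f_{j,x_\ell})_{j,\ell\in\mathcal K}$. $\langle H\rangle$ is the Jacobian over all nodes (output last) with last column replaced by the column with $-f_{\iota_m,\mathcal I}$ in row $\iota_m$ and $0$ elsewhere. *)

theory Defs
  imports Complex_Main "HOL-Library.Poly_Mapping" "HOL-Library.Product_Lexorder" "HOL-Library.Option_ord"
          "HOL-Combinatorics.Permutations" "HOL-Computational_Algebra.Factorial_Ring"
begin

text \<open>A network: finite node set V, arrows E (pair (a,b) means arrow a -> b), E within V.\<close>

definition downstream :: "('n \<times> 'n) set \<Rightarrow> 'n \<Rightarrow> 'n \<Rightarrow> bool" where
  "downstream E a b \<longleftrightarrow> (a, b) \<in> E\<^sup>*"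

definition core_network :: "'n set \<Rightarrow> ('n \<times> 'n) set \<Rightarrow> 'n set \<Rightarrow> 'n \<Rightarrow> bool" where
  "core_network V E Inp out \<longleftrightarrow>
     finite V \<and> E \<subseteq> V \<times> V \<and> Inp \<subseteq> V \<and> Inp \<noteq> {} \<and> out \<in> V \<and> out \<notin> Inp \<and>
     (\<forall>v\<in>V. downstream E v out \<and> (\<exists>i\<in>Inp. downstream E i v))"

definition simple_path :: "('n \<times> 'n) set \<Rightarrow> 'n \<Rightarrow> 'n \<Rightarrow> 'n list \<Rightarrow> bool" where
  "simple_path E a b xs \<longleftrightarrow> xs \<noteq> [] \<and> hd xs = a \<and> last xs = b \<and> distinct xs \<and>
     (\<forall>k. Suc k < length xs \<longrightarrow> (xs ! k, xs ! Suc k) \<in> E)"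

definition simple_node :: "('n \<times> 'n) set \<Rightarrow> 'n \<Rightarrow> 'n \<Rightarrow> 'n \<Rightarrow> bool" where
  "simple_node E i out v \<longleftrightarrow> (\<exists>S. simple_path E i out S \<and> v \<in> set S)"

definition appendage_node :: "('n \<times> 'n) set \<Rightarrow> 'n \<Rightarrow> 'n \<Rightarrow> 'n \<Rightarrow> bool" where
  "appendage_node E i out v \<longleftrightarrow> downstream E i v \<and> \<not> simple_node E i out v"

definition abs_appendage_nodes :: "'n set \<Rightarrow> ('n \<times> 'n) set \<Rightarrow> 'n set \<Rightarrow> 'n \<Rightarrow> 'n set" where
  "abs_appendage_nodes V E Inp out = {v \<in> V. \<forall>i\<in>Inp. appendage_node E i out v}"

definition path_equiv :: "('n \<times> 'n) set \<Rightarrow> 'n set \<Rightarrow> 'n \<Rightarrow> 'n \<Rightarrow> bool" where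
  "path_equiv E W a b \<longleftrightarrow> a \<in> W \<and> b \<in> W \<and>
     (a, b) \<in> (E \<inter> W \<times> W)\<^sup>* \<and> (b, a) \<in> (E \<inter> W \<times> W)\<^sup>*"

definition path_component :: "('n \<times> 'n) set \<Rightarrow> 'n set \<Rightarrow> 'n set \<Rightarrow> bool" where
  "path_component E W K \<longleftrightarrow> (\<exists>a\<in>W. K = {b. path_equiv E W a b})"

definition compl_path :: "'n set \<Rightarrow> 'n list \<Rightarrow> 'n set" where
  "compl_path V S = V - set S"

text \<open>Indeterminates are indexed by
  ('n \<times> 'n option): (j, Some l) stands for f_{j,x_l}; (j, None) stands for f_{j,I}.\<close>

type_synonym 'v mpoly = "('v \<Rightarrow>\<^sub>0 nat) \<Rightarrow>\<^sub>0 real"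

definition Var :: "'v \<Rightarrow> 'v mpoly" where
  "Var v = Poly_Mapping.single (Poly_Mapping.single v 1) 1"

text \<open>Generic Jacobian entry (row j, column l): indeterminate f_{j,x_l} if there is an arrow
  l -> j or l = j (all nodes are self-coupled), otherwise 0.\<close>
definition jac :: "('n \<times> 'n) set \<Rightarrow> 'n \<Rightarrow> 'n \<Rightarrow> ('n \<times> 'n option) mpoly" where
  "jac E j l = (if (l, j) \<in> E \<or> l = j then Var (j, Some l) else 0)"

definition det_on :: "'n set \<Rightarrow> ('n \<Rightarrow> 'n \<Rightarrow> 'a::comm_ring_1) \<Rightarrow> 'a" where
  "det_on K A = (\<Sum>p \<in> {p. p permutes K}. of_int (sign p) * (\<Prod>i\<in>K. A i (p i)))"

definition H_mat :: "('n \<times> 'n) set \<Rightarrow> 'n set \<Rightarrow> 'n \<Rightarrow> 'n \<Rightarrow> 'n \<Rightarrow> ('n \<times> 'n option) mpoly" where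
  "H_mat E Inp out = (\<lambda>j l. if l = out then (if j \<in> Inp then - Var (j, None) else 0) else jac E j l)"

end

(*
  Irreducibility: because K is strongly connected, every entry of J_K occurs in det J_K, which is
  multilinear with one entry from each row and each column in every monomial. In a factorisation
  A * B, a variable of A and a variable of B must occur together in some monomial (compare the
  degrees in these two variables), so walking along the arrows of K from a diagonal entry drags
  every variable into the factor containing that entry, and the other factor is a constant.

  Divisibility: let p be a permutation contributing a nonzero term to det <H>. Read backwards, the
  cycle of p through o is a simple path S from an input node to o; S avoids K, whose nodes are
  absolutely appendage. The remaining cycles of p lie in CS and run along arrows, so p maps every
  node to a CS-path equivalent one, and by (b) p maps K into itself. Hence the Leibniz expansion
  of det <H> is block triangular and splits off det J_K.
*)

theory Submission
  imports Defs "HOL-Computational_Algebra.Polynomial" "HOL-Library.Transitive_Closure_Table"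
    "HOL-Combinatorics.Cycles"
begin

section \<open>Degrees of products of multivariate polynomials\<close>

definition degree_in :: "'v set \<Rightarrow> ('v \<Rightarrow>\<^sub>0 nat) \<Rightarrow> nat" where
  "degree_in W m = (\<Sum>v\<in>W. Poly_Mapping.lookup m v)"

lemma degree_in_add: "degree_in W (a + b) = degree_in W a + degree_in W b"
  by (simp add: degree_in_def lookup_add sum.distrib)

text \<open>Grading the monomials of \<open>P\<close> by their degree in \<open>W\<close> gives a ring homomorphism into
  univariate polynomials; since \<open>'v mpoly\<close> has no zero divisors, \<open>W\<close>-degrees then add up
  under multiplication.\<close>
definition grading :: "'v set \<Rightarrow> 'v mpoly \<Rightarrow> 'v mpoly poly" where
  "grading W P = (\<Sum>m\<in>Poly_Mapping.keys P.
     monom (Poly_Mapping.single m (Poly_Mapping.lookup P m)) (degree_in W m))"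

lemma grading_eq_sum:
  assumes "finite S" "Poly_Mapping.keys P \<subseteq> S"
  shows "grading W P = (\<Sum>m\<in>S. monom (Poly_Mapping.single m (Poly_Mapping.lookup P m)) (degree_in W m))"
  unfolding grading_def
  by (rule sum.mono_neutral_left) (use assms in \<open>auto simp: in_keys_iff\<close>)

lemma grading_zero [simp]: "grading W 0 = 0"
  by (simp add: grading_def)

lemma grading_add: "grading W (P + Q) = grading W P + grading W Q"
proof -
  let ?S = "Poly_Mapping.keys P \<union> Poly_Mapping.keys Q"
  have "grading W (P + Q) =
      (\<Sum>m\<in>?S. monom (Poly_Mapping.single m (Poly_Mapping.lookup (P + Q) m)) (degree_in W m))"
    by (rule grading_eq_sum) (simp_all add: keys_add)
  also have "\<dots> = (\<Sum>m\<in>?S. monom (Poly_Mapping.single m (Poly_Mapping.lookup P m)) (degree_in W m)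
      + monom (Poly_Mapping.single m (Poly_Mapping.lookup Q m)) (degree_in W m))"
    by (simp add: lookup_add single_add add_monom)
  also have "\<dots> = grading W P + grading W Q"
    using grading_eq_sum[of ?S P W] grading_eq_sum[of ?S Q W] by (simp add: sum.distrib)
  finally show ?thesis .
qed

lemma grading_single:
  "grading W (Poly_Mapping.single m c) = monom (Poly_Mapping.single m c) (degree_in W m)"
  by (cases "c = 0") (simp_all add: grading_def)

lemma update_eq_single_add:
  assumes "a \<notin> Poly_Mapping.keys f"
  shows "Poly_Mapping.update a b f = Poly_Mapping.single a b + f"
  using assms
  by (intro poly_mapping_eqI) (auto simp: lookup_update lookup_add lookup_single in_keys_iff)

lemma grading_mult_single:
  "grading W (Poly_Mapping.single m c * Q) = grading W (Poly_Mapping.single m c) * grading W Q"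
proof (induction Q rule: update_induct)
  case (update a b f)
  then show ?case
    by (simp add: update_eq_single_add distrib_left grading_add mult_single grading_single
        mult_monom degree_in_add)
qed simp

lemma grading_mult: "grading W (P * Q) = grading W P * grading W Q"
proof (induction P rule: update_induct)
  case (update a b f)
  then show ?case
    by (simp add: update_eq_single_add distrib_right grading_add grading_mult_single)
qed simp

lemma lookup_coeff_grading:
  "Poly_Mapping.lookup (coeff (grading W P) k) m =
     (if degree_in W m = k then Poly_Mapping.lookup P m else 0)"
proof -
  have "Poly_Mapping.lookup (coeff (grading W P) k) m =
      (\<Sum>m'\<in>Poly_Mapping.keys P. if k = degree_in W m'
         then Poly_Mapping.lookup (Poly_Mapping.single m' (Poly_Mapping.lookup P m')) m else 0)"
    by (simp add: grading_def coeff_sum coeff_monom lookup_sum; intro sum.cong; auto)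
  also have "\<dots> = (\<Sum>m'\<in>Poly_Mapping.keys P.
      if m' = m then (if degree_in W m = k then Poly_Mapping.lookup P m else 0) else 0)"
    by (rule sum.cong) (auto simp: lookup_single)
  also have "\<dots> = (if degree_in W m = k then Poly_Mapping.lookup P m else 0)"
    by (auto simp: in_keys_iff)
  finally show ?thesis .
qed

lemma degree_in_le_degree_grading:
  assumes "m \<in> Poly_Mapping.keys P"
  shows "degree_in W m \<le> degree (grading W P)"
proof (rule le_degree)
  have "Poly_Mapping.lookup (coeff (grading W P) (degree_in W m)) m \<noteq> 0"
    using assms by (simp add: lookup_coeff_grading in_keys_iff)
  then show "coeff (grading W P) (degree_in W m) \<noteq> 0" by auto
qed

lemma grading_eq_0_iff [simp]: "grading W P = 0 \<longleftrightarrow> P = 0"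
proof
  assume "grading W P = 0"
  then have "Poly_Mapping.lookup P m = 0" for m
    using lookup_coeff_grading[of W P "degree_in W m" m] by simp
  then show "P = 0" by (simp add: poly_mapping_eqI)
qed simp

lemma degree_grading_attained:
  assumes "P \<noteq> 0"
  obtains m where "m \<in> Poly_Mapping.keys P" "degree_in W m = degree (grading W P)"
proof -
  have "coeff (grading W P) (degree (grading W P)) \<noteq> 0"
    using assms by simp
  then obtain m where "Poly_Mapping.lookup (coeff (grading W P) (degree (grading W P))) m \<noteq> 0"
    by (metis lookup_zero poly_mapping_eqI)
  then show ?thesis
    using that by (auto simp: lookup_coeff_grading in_keys_iff split: if_splits)
qed

lemma keys_mult_degree_in:
  fixes A B :: "'v::linorder mpoly"
  assumes "mA \<in> Poly_Mapping.keys A" "mB \<in> Poly_Mapping.keys B"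
  obtains m where "m \<in> Poly_Mapping.keys (A * B)" "degree_in W mA + degree_in W mB \<le> degree_in W m"
proof -
  have "A \<noteq> 0" "B \<noteq> 0" using assms by auto
  then obtain m where m: "m \<in> Poly_Mapping.keys (A * B)" "degree_in W m = degree (grading W (A * B))"
    using degree_grading_attained[of "A * B" W] by auto
  have "degree_in W mA + degree_in W mB \<le> degree (grading W A) + degree (grading W B)"
    using assms by (intro add_mono degree_in_le_degree_grading)
  also have "\<dots> = degree_in W m"
    using m(2) \<open>A \<noteq> 0\<close> \<open>B \<noteq> 0\<close> by (simp add: grading_mult degree_mult_eq)
  finally show ?thesis using m(1) that by blast
qed

section \<open>An irreducibility criterion for multilinear polynomials\<close>

definition occurs :: "'v \<Rightarrow> 'v mpoly \<Rightarrow> bool" where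
  "occurs v P \<longleftrightarrow> (\<exists>m\<in>Poly_Mapping.keys P. Poly_Mapping.lookup m v \<noteq> 0)"

definition multilinear :: "'v mpoly \<Rightarrow> bool" where
  "multilinear P \<longleftrightarrow> (\<forall>m\<in>Poly_Mapping.keys P. \<forall>v. Poly_Mapping.lookup m v \<le> 1)"

definition exclusive_vars :: "'v mpoly \<Rightarrow> ('v \<times> 'v) set" where
  "exclusive_vars P = {(v, w). occurs v P \<and> occurs w P \<and>
     (\<forall>m\<in>Poly_Mapping.keys P. Poly_Mapping.lookup m v = 0 \<or> Poly_Mapping.lookup m w = 0)}"

lemma occurs_mult:
  assumes "occurs v (A * B)"
  shows "occurs v A \<or> occurs v B"
proof -
  obtain m where m: "m \<in> Poly_Mapping.keys (A * B)" "Poly_Mapping.lookup m v \<noteq> 0"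
    using assms by (auto simp: occurs_def)
  then obtain a b where "m = a + b" "a \<in> Poly_Mapping.keys A" "b \<in> Poly_Mapping.keys B"
    using keys_mult by blast
  then show ?thesis
    using m(2) by (auto simp: occurs_def lookup_add)
qed

lemma occurs_not_unit:
  fixes P :: "'v::linorder mpoly"
  assumes "occurs v P"
  shows "\<not> P dvd 1"
proof
  assume "P dvd 1"
  then obtain X where X: "1 = P * X" by (elim dvdE)
  obtain mP where mP: "mP \<in> Poly_Mapping.keys P" "Poly_Mapping.lookup mP v \<noteq> 0"
    using assms by (auto simp: occurs_def)
  obtain mX where "mX \<in> Poly_Mapping.keys X"
    using X by (metis all_not_in_conv keys_eq_empty mult_zero_right zero_neq_one)
  then obtain m where "m \<in> Poly_Mapping.keys (1 :: 'v mpoly)"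
      "degree_in {v} mP + degree_in {v} mX \<le> degree_in {v} m"
    using keys_mult_degree_in[OF mP(1)] X by metis
  then show False
    using mP(2) by (simp add: degree_in_def)
qed

lemma unit_if_no_occurs:
  fixes B :: "'v mpoly"
  assumes "B \<noteq> 0" "\<And>v. \<not> occurs v B"
  shows "B dvd 1"
proof -
  let ?c = "Poly_Mapping.lookup B 0"
  have "Poly_Mapping.keys B \<subseteq> {0}"
    using assms(2) by (auto simp: occurs_def poly_mapping_eqI)
  then have B: "B = Poly_Mapping.single 0 ?c"
    by (intro poly_mapping_eqI) (auto simp: lookup_single in_keys_iff when_def)
  then have "?c \<noteq> 0" using assms(1) by (metis single_zero)
  then have "B * Poly_Mapping.single 0 (1 / ?c) = 1"
    by (subst B) (simp add: mult_single)
  then show ?thesis by (metis dvdI)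
qed

text \<open>Degrees in \<open>{v, w}\<close> add up, so some monomial of \<open>A * B\<close> has degree at least 2 in
  \<open>{v, w}\<close>; multilinearity then forces \<open>v \<noteq> w\<close>, both occurring in that monomial.\<close>
lemma multilinear_factors_cooccur:
  fixes A B :: "'v::linorder mpoly"
  assumes "multilinear (A * B)" "occurs v A" "occurs w B"
  shows "v \<noteq> w \<and> (\<exists>m\<in>Poly_Mapping.keys (A * B).
           Poly_Mapping.lookup m v \<noteq> 0 \<and> Poly_Mapping.lookup m w \<noteq> 0)"
proof -
  obtain mA where mA: "mA \<in> Poly_Mapping.keys A" "Poly_Mapping.lookup mA v \<noteq> 0"
    using assms(2) by (auto simp: occurs_def)
  obtain mB where mB: "mB \<in> Poly_Mapping.keys B" "Poly_Mapping.lookup mB w \<noteq> 0"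
    using assms(3) by (auto simp: occurs_def)
  obtain m where m: "m \<in> Poly_Mapping.keys (A * B)"
      "degree_in {v, w} mA + degree_in {v, w} mB \<le> degree_in {v, w} m"
    using keys_mult_degree_in[OF mA(1) mB(1)] by blast
  have le1: "Poly_Mapping.lookup m v \<le> 1" "Poly_Mapping.lookup m w \<le> 1"
    using assms(1) m(1) by (auto simp: multilinear_def)
  show ?thesis
  proof (cases "v = w")
    case True
    then show ?thesis using m(2) mA(2) mB(2) le1 by (simp add: degree_in_def)
  next
    case False
    then have "1 + 1 \<le> Poly_Mapping.lookup m v + Poly_Mapping.lookup m w"
      using m(2) mA(2) mB(2) by (simp add: degree_in_def)
    then have "Poly_Mapping.lookup m v = 1" "Poly_Mapping.lookup m w = 1"
      using le1 by linarith+
    then show ?thesis using False m(1) by (intro conjI bexI[of _ m]) auto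
  qed
qed

lemma multilinear_cofactor_unit:
  fixes A B :: "'v::linorder mpoly"
  assumes ml: "multilinear (A * B)" and v0: "occurs v0 A" and B: "B \<noteq> 0"
    and connected: "\<And>w. occurs w (A * B) \<Longrightarrow> (v0, w) \<in> (exclusive_vars (A * B))\<^sup>*"
  shows "B dvd 1"
proof (rule unit_if_no_occurs[OF B])
  have in_A: "occurs w A" if "occurs w (A * B)" for w
    using connected[OF that]
  proof (induction rule: rtrancl_induct)
    case (step u w)
    show ?case
    proof (rule ccontr)
      assume "\<not> occurs w A"
      then have "occurs w B"
        using step.hyps(2) occurs_mult[of w A B] by (auto simp: exclusive_vars_def)
      then obtain m where "m \<in> Poly_Mapping.keys (A * B)"
          "Poly_Mapping.lookup m u \<noteq> 0" "Poly_Mapping.lookup m w \<noteq> 0"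
        using multilinear_factors_cooccur[OF ml step.IH] by blast
      then show False
        using step.hyps(2) by (auto simp: exclusive_vars_def)
    qed
  qed (rule v0)
  show "\<not> occurs w B" for w
  proof
    assume w: "occurs w B"
    then have "occurs w (A * B)"
      using multilinear_factors_cooccur[OF ml v0] by (auto simp: occurs_def)
    then have "occurs w A" by (rule in_A)
    from multilinear_factors_cooccur[OF ml this w] show False by simp
  qed
qed

lemma irreducible_multilinear:
  fixes P :: "'v::linorder mpoly"
  assumes ml: "multilinear P" and v0: "occurs v0 P"
    and connected: "\<And>w. occurs w P \<Longrightarrow> (v0, w) \<in> (exclusive_vars P)\<^sup>*"
  shows "irreducible P"
proof (rule irreducibleI)
  show "P \<noteq> 0" using v0 by (auto simp: occurs_def)
  show "\<not> P dvd 1" using occurs_not_unit[OF v0] .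
  fix A B assume P: "P = A * B"
  with \<open>P \<noteq> 0\<close> have "A \<noteq> 0" "B \<noteq> 0" by auto
  from v0 P consider "occurs v0 A" | "occurs v0 B" using occurs_mult by metis
  then show "A dvd 1 \<or> B dvd 1"
  proof cases
    case 1
    then show ?thesis using multilinear_cofactor_unit[of A B] ml connected P \<open>B \<noteq> 0\<close> by blast
  next
    case 2
    then show ?thesis
      using multilinear_cofactor_unit[of B A] ml connected P \<open>A \<noteq> 0\<close> by (simp add: mult.commute)
  qed
qed

section \<open>Jacobian determinants of strongly connected subnetworks\<close>

definition arrow_perm :: "('n \<times> 'n) set \<Rightarrow> 'n set \<Rightarrow> ('n \<Rightarrow> 'n) \<Rightarrow> bool" where
  "arrow_perm E K p \<longleftrightarrow> p permutes K \<and> (\<forall>i\<in>K. p i = i \<or> (p i, i) \<in> E)"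

definition perm_monomial :: "'n set \<Rightarrow> ('n \<Rightarrow> 'n) \<Rightarrow> ('n \<times> 'n option) \<Rightarrow>\<^sub>0 nat" where
  "perm_monomial K p = (\<Sum>i\<in>K. Poly_Mapping.single (i, Some (p i)) 1)"

lemma lookup_perm_monomial:
  assumes "finite K"
  shows "Poly_Mapping.lookup (perm_monomial K p) (j, c) = (if j \<in> K \<and> c = Some (p j) then 1 else 0)"
proof -
  have "Poly_Mapping.lookup (perm_monomial K p) (j, c) =
      (\<Sum>i\<in>K. if i = j then (if c = Some (p j) then 1 else 0) else 0)"
    unfolding perm_monomial_def lookup_sum by (intro sum.cong) (auto simp: lookup_single)
  then show ?thesis using assms by simp
qed

lemma perm_monomial_inj:
  assumes "finite K" "p permutes K" "q permutes K" "perm_monomial K p = perm_monomial K q"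
  shows "p = q"
proof
  fix j
  show "p j = q j"
  proof (cases "j \<in> K")
    case True
    then show ?thesis
      using arg_cong[OF assms(4), of "\<lambda>m. Poly_Mapping.lookup m (j, Some (p j))"]
      by (simp add: lookup_perm_monomial[OF assms(1)] split: if_splits)
  qed (use assms(2,3) permutes_not_in in metis)
qed

lemma prod_single:
  fixes f :: "'i \<Rightarrow> 'a::comm_monoid_add" and g :: "'i \<Rightarrow> 'b::comm_semiring_1"
  assumes "finite K"
  shows "(\<Prod>i\<in>K. Poly_Mapping.single (f i) (g i)) = Poly_Mapping.single (\<Sum>i\<in>K. f i) (\<Prod>i\<in>K. g i)"
  using assms by (induction K rule: finite_induct) (auto simp: mult_single)

lemma prod_jac_perm:
  assumes "finite K" "p permutes K"
  shows "(\<Prod>i\<in>K. jac E i (p i)) =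
    (if arrow_perm E K p then Poly_Mapping.single (perm_monomial K p) 1 else 0)"
proof (cases "arrow_perm E K p")
  case True
  then have "(\<Prod>i\<in>K. jac E i (p i)) =
      (\<Prod>i\<in>K. Poly_Mapping.single (Poly_Mapping.single (i, Some (p i)) 1) 1)"
    by (intro prod.cong) (auto simp: arrow_perm_def jac_def Var_def)
  then show ?thesis
    using True by (simp add: prod_single[OF assms(1)] perm_monomial_def)
next
  case False
  then obtain i where "i \<in> K" "p i \<noteq> i" "(p i, i) \<notin> E"
    using assms(2) by (auto simp: arrow_perm_def)
  then have "jac E i (p i) = 0" by (simp add: jac_def)
  then show ?thesis
    using False assms(1) \<open>i \<in> K\<close> by (meson prod_zero)
qed

lemma det_jac_eq_sum:
  assumes "finite K"
  shows "det_on K (jac E) =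
    (\<Sum>p | arrow_perm E K p. Poly_Mapping.single (perm_monomial K p) (of_int (sign p)))"
proof -
  have "det_on K (jac E) = (\<Sum>p | arrow_perm E K p. of_int (sign p) * (\<Prod>i\<in>K. jac E i (p i)))"
    unfolding det_on_def
    by (rule sum.mono_neutral_right[OF finite_permutations[OF assms]])
      (auto simp: arrow_perm_def prod_jac_perm[OF assms])
  also have "\<dots> = (\<Sum>p | arrow_perm E K p.
      Poly_Mapping.single (perm_monomial K p) (of_int (sign p)))"
    by (intro sum.cong refl)
      (auto simp: prod_jac_perm[OF assms] arrow_perm_def mult_single simp flip: single_of_int)
  finally show ?thesis .
qed

lemma keys_det_jac:
  assumes "finite K" "m \<in> Poly_Mapping.keys (det_on K (jac E))"
  obtains p where "arrow_perm E K p" "m = perm_monomial K p"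
  using subsetD[OF keys_sum assms(2)[unfolded det_jac_eq_sum[OF assms(1)]]] that
  by (auto split: if_splits)

lemma perm_monomial_in_keys_det_jac:
  assumes "finite K" "arrow_perm E K p"
  shows "perm_monomial K p \<in> Poly_Mapping.keys (det_on K (jac E))"
proof -
  have fin: "finite {p. arrow_perm E K p}"
    by (rule finite_subset[OF _ finite_permutations[OF assms(1)]]) (auto simp: arrow_perm_def)
  have "Poly_Mapping.lookup (det_on K (jac E)) (perm_monomial K p) =
      (\<Sum>q | arrow_perm E K q. if q = p then of_int (sign p) else 0)"
    unfolding det_jac_eq_sum[OF assms(1)] lookup_sum
  proof (intro sum.cong refl)
    fix q assume "q \<in> {q. arrow_perm E K q}"
    then have "perm_monomial K q = perm_monomial K p \<Longrightarrow> q = p"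
      using perm_monomial_inj[OF assms(1)] assms(2) by (auto simp: arrow_perm_def)
    then show "Poly_Mapping.lookup (Poly_Mapping.single (perm_monomial K q) (of_int (sign q)))
        (perm_monomial K p) = (if q = p then of_int (sign p) else 0)"
      by (auto simp: lookup_single when_def)
  qed
  also have "\<dots> = of_int (sign p)"
    using assms(2) fin by simp
  finally show ?thesis
    by (simp add: in_keys_iff sign_def)
qed

lemma multilinear_det_jac:
  assumes "finite K"
  shows "multilinear (det_on K (jac E))"
  unfolding multilinear_def
proof (intro ballI allI)
  fix m v assume "m \<in> Poly_Mapping.keys (det_on K (jac E))"
  then obtain p where "m = perm_monomial K p" using keys_det_jac[OF assms] by blast
  then show "Poly_Mapping.lookup m v \<le> 1"
    by (cases v) (simp add: lookup_perm_monomial[OF assms])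
qed

lemma occurs_det_jac_iff:
  assumes "finite K"
  shows "occurs (j, c) (det_on K (jac E)) \<longleftrightarrow> (\<exists>p. arrow_perm E K p \<and> j \<in> K \<and> c = Some (p j))"
proof
  assume "occurs (j, c) (det_on K (jac E))"
  then obtain m where "m \<in> Poly_Mapping.keys (det_on K (jac E))" "Poly_Mapping.lookup m (j, c) \<noteq> 0"
    by (auto simp: occurs_def)
  then show "\<exists>p. arrow_perm E K p \<and> j \<in> K \<and> c = Some (p j)"
    by (metis keys_det_jac[OF assms] lookup_perm_monomial[OF assms])
next
  assume "\<exists>p. arrow_perm E K p \<and> j \<in> K \<and> c = Some (p j)"
  then show "occurs (j, c) (det_on K (jac E))"
    unfolding occurs_def
    by (metis perm_monomial_in_keys_det_jac[OF assms] lookup_perm_monomial[OF assms] one_neq_zero)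
qed

text \<open>Each monomial of the determinant takes exactly one entry from every row and every column.\<close>
lemma exclusive_vars_det_jac:
  assumes "finite K" "occurs (j, c) (det_on K (jac E))" "occurs (j', c') (det_on K (jac E))"
    "j = j' \<or> c = c'" "(j, c) \<noteq> (j', c')"
  shows "((j, c), (j', c')) \<in> exclusive_vars (det_on K (jac E))"
proof -
  have "Poly_Mapping.lookup m (j, c) = 0 \<or> Poly_Mapping.lookup m (j', c') = 0"
    if m: "m \<in> Poly_Mapping.keys (det_on K (jac E))" for m
  proof -
    obtain p where p: "arrow_perm E K p" "m = perm_monomial K p"
      using keys_det_jac[OF assms(1) m] .
    have "inj p" using p(1) by (auto simp: arrow_perm_def permutes_inj)
    then show ?thesis
      using assms(4,5) by (auto simp: p(2) lookup_perm_monomial[OF assms(1)] dest: injD)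
  qed
  then show ?thesis using assms(2,3) by (simp add: exclusive_vars_def)
qed

lemma rtrancl_path_predecessor_perm:
  assumes "rtrancl_path R x xs y" "distinct (x # xs)"
  shows "\<exists>p. p permutes set (x # xs) \<and> p x = y \<and> (\<forall>i\<in>set xs. R (p i) i)"
  using assms
proof (induction rule: rtrancl_path.induct)
  case (base x)
  then show ?case by (intro exI[of _ id]) (simp add: id_def)
next
  case (step x z zs y)
  then obtain q where q: "q permutes set (z # zs)" "q z = y" "\<forall>i\<in>set zs. R (q i) i"
    by auto
  let ?p = "q \<circ> Transposition.transpose x z"
  have x: "x \<notin> set (z # zs)" and z: "z \<notin> set zs" using step.prems by auto
  then have "q x = x" using permutes_not_in[OF q(1)] by blast
  have "?p i = q i" if "i \<in> set zs" for i
    using that x z by (auto simp: transpose_def)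
  then have "\<forall>i\<in>set (z # zs). R (?p i) i"
    using q(3) \<open>q x = x\<close> step.hyps(1) by auto
  moreover have "?p permutes set (x # z # zs)"
    by (rule permutes_compose[OF permutes_swap_id permutes_subset[OF q(1)]]) auto
  moreover have "?p x = y" using q(2) by simp
  ultimately show ?case by blast
qed

lemma arrow_perm_through_arrow:
  assumes "j \<in> K" "(l, j) \<in> E" "(j, l) \<in> (E \<inter> K \<times> K)\<^sup>*"
  obtains p where "arrow_perm E K p" "p j = l"
proof -
  let ?R = "\<lambda>a b. (a, b) \<in> E \<inter> K \<times> K"
  have "{(a, b). ?R a b} = E \<inter> K \<times> K" by auto
  then have "?R\<^sup>*\<^sup>* j l" using assms(3) by (simp add: rtranclp_rtrancl_eq)
  then obtain xs0 where "rtrancl_path ?R j xs0 l" by (auto simp: rtranclp_eq_rtrancl_path)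
  then obtain xs where xs: "rtrancl_path ?R j xs l" "distinct (j # xs)"
    by (rule rtrancl_path_distinct)
  have "set xs \<subseteq> K" using xs(1) by (induction rule: rtrancl_path.induct) auto
  then have sub: "set (j # xs) \<subseteq> K" using assms(1) by simp
  obtain p where p: "p permutes set (j # xs)" "p j = l" "\<forall>i\<in>set xs. ?R (p i) i"
    using rtrancl_path_predecessor_perm[OF xs] by blast
  have "arrow_perm E K p"
    unfolding arrow_perm_def
  proof
    show "p permutes K" using permutes_subset[OF p(1) sub] .
    show "\<forall>i\<in>K. p i = i \<or> (p i, i) \<in> E"
      using p assms(2) permutes_not_in[OF p(1)] by (metis IntD1 set_ConsD)
  qed
  then show ?thesis using p(2) that by blast
qed

lemma occurs_diag_det_jac:
  assumes "finite K" "j \<in> K"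
  shows "occurs (j, Some j) (det_on K (jac E))"
proof -
  have "arrow_perm E K id" by (simp add: arrow_perm_def)
  then show ?thesis using assms occurs_det_jac_iff[OF assms(1)] by fastforce
qed

lemma diag_exclusive_vars_det_jac:
  assumes fin: "finite K" and strong: "\<forall>a\<in>K. \<forall>b\<in>K. (a, b) \<in> (E \<inter> K \<times> K)\<^sup>*"
    and "k \<in> K" "j \<in> K"
  shows "((k, Some k), (j, Some j)) \<in> (exclusive_vars (det_on K (jac E)))\<^sup>*"
proof -
  let ?X = "exclusive_vars (det_on K (jac E))"
  have "(k, j) \<in> (E \<inter> K \<times> K)\<^sup>*" using strong assms(3,4) by blast
  then show ?thesis
  proof (induction rule: rtrancl_induct)
    case (step y z)
    then have yz: "y \<in> K" "z \<in> K" "(y, z) \<in> E" by auto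
    show ?case
    proof (cases "y = z")
      case False
      obtain p where "arrow_perm E K p" "p z = y"
        using arrow_perm_through_arrow[OF yz(2,3)] strong yz(1,2) by blast
      then have "occurs (z, Some y) (det_on K (jac E))"
        using occurs_det_jac_iff[OF fin] yz(2) by metis
      txt \<open>The entry \<open>(z, y)\<close> shares its column with \<open>(y, y)\<close> and its row with \<open>(z, z)\<close>.\<close>
      then have "((y, Some y), (z, Some y)) \<in> ?X" "((z, Some y), (z, Some z)) \<in> ?X"
        using exclusive_vars_det_jac[OF fin] occurs_diag_det_jac[OF fin] yz False by auto
      then show ?thesis using step.IH by (blast intro: rtrancl_into_rtrancl)
    qed (use step.IH in simp)
  qed simp
qed

lemma irreducible_det_jac:
  fixes E :: "('n::linorder \<times> 'n) set"
  assumes fin: "finite K" and "K \<noteq> {}"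
    and strong: "\<forall>a\<in>K. \<forall>b\<in>K. (a, b) \<in> (E \<inter> K \<times> K)\<^sup>*"
  shows "irreducible (det_on K (jac E))"
proof -
  let ?D = "det_on K (jac E)"
  obtain k where k: "k \<in> K" using assms(2) by blast
  show ?thesis
  proof (rule irreducible_multilinear[OF multilinear_det_jac[OF fin] occurs_diag_det_jac[OF fin k]])
    fix w assume w: "occurs w ?D"
    obtain j c where jc: "w = (j, c)" by fastforce
    then have j: "j \<in> K" using w occurs_det_jac_iff[OF fin] by blast
    note diag = diag_exclusive_vars_det_jac[OF fin strong k j]
    show "((k, Some k), w) \<in> (exclusive_vars ?D)\<^sup>*"
    proof (cases "c = Some j")
      case False
      then have "((j, Some j), (j, c)) \<in> exclusive_vars ?D"
        using exclusive_vars_det_jac[OF fin occurs_diag_det_jac[OF fin j]] w jc by simp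
      then show ?thesis using diag jc by simp
    qed (use diag jc in simp)
  qed
qed

section \<open>Block-triangular Leibniz expansions\<close>

lemma permutes_split_invariant:
  assumes p: "p permutes V" and "finite K" "K \<subseteq> V" "p ` K \<subseteq> K"
  shows "restrict_id p K permutes K" "restrict_id p (V - K) permutes (V - K)"
    "restrict_id p K \<circ> restrict_id p (V - K) = p"
proof -
  have inj: "inj p" using permutes_inj[OF p] .
  have inj_on: "inj_on p X" for X using inj_on_subset[OF inj subset_UNIV] .
  have imK: "p ` K = K"
    using endo_inj_surj[OF assms(2,4) inj_on] .
  then have imR: "p ` (V - K) = V - K"
    using permutes_image[OF p] by (simp add: image_set_diff[OF inj])
  show "restrict_id p K permutes K"
    using imK inj_on by (intro permutes_restrict_id) (simp add: bij_betw_def)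
  show "restrict_id p (V - K) permutes (V - K)"
    using imR inj_on by (intro permutes_restrict_id) (simp add: bij_betw_def)
  show "restrict_id p K \<circ> restrict_id p (V - K) = p"
  proof
    fix x
    show "(restrict_id p K \<circ> restrict_id p (V - K)) x = p x"
    proof (cases "x \<in> V - K")
      case True
      then have "p x \<notin> K" using imR by blast
      then show ?thesis using True by simp
    qed (use permutes_not_in[OF p, of x] assms(3) in \<open>auto simp: restrict_id_def\<close>)
  qed
qed

lemma permutes_compose_split:
  assumes q: "q permutes K" and r: "r permutes (V - K)" and "K \<subseteq> V"
  shows "q \<circ> r permutes V" "(q \<circ> r) ` K \<subseteq> K"
    "restrict_id (q \<circ> r) K = q" "restrict_id (q \<circ> r) (V - K) = r"
proof -
  show "q \<circ> r permutes V"
    using assms by (intro permutes_compose permutes_subset[OF r] permutes_subset[OF q]) auto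
  show "(q \<circ> r) ` K \<subseteq> K"
    using permutes_not_in[OF r] permutes_in_image[OF q] by auto
  show "restrict_id (q \<circ> r) K = q"
    using permutes_not_in[OF r] permutes_not_in[OF q] by (auto simp: restrict_id_def)
  have "q (r x) = r x" if "x \<in> V - K" for x
    using that permutes_in_image[OF r, of x] permutes_not_in[OF q, of "r x"] by blast
  then show "restrict_id (q \<circ> r) (V - K) = r"
    using permutes_not_in[OF r] by (auto simp: restrict_id_def)
qed

lemma det_term_compose_split:
  fixes A :: "'n \<Rightarrow> 'n \<Rightarrow> 'a::comm_ring_1"
  assumes "finite V" "K \<subseteq> V" and q: "q permutes K" and r: "r permutes (V - K)"
  shows "of_int (sign (q \<circ> r)) * (\<Prod>i\<in>V. A i ((q \<circ> r) i)) =
    (of_int (sign q) * (\<Prod>i\<in>K. A i (q i))) * (of_int (sign r) * (\<Prod>i\<in>V - K. A i (r i)))"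
proof -
  have "finite K" using assms(1,2) by (rule finite_subset[rotated])
  have q_fixes: "q (r i) = r i" if "i \<in> V - K" for i
    using that permutes_in_image[OF r, of i] permutes_not_in[OF q, of "r i"] by blast
  have "sign (q \<circ> r) = sign q * sign r"
    using q r assms(1) \<open>finite K\<close> by (intro sign_compose) (auto simp: permutation_permutes)
  moreover have "(\<Prod>i\<in>V. A i ((q \<circ> r) i)) =
      (\<Prod>i\<in>V - K. A i ((q \<circ> r) i)) * (\<Prod>i\<in>K. A i ((q \<circ> r) i))"
    by (rule prod.subset_diff[OF assms(2,1)])
  moreover have "(\<Prod>i\<in>K. A i ((q \<circ> r) i)) = (\<Prod>i\<in>K. A i (q i))"
    using permutes_not_in[OF r] by (intro prod.cong) auto
  moreover have "(\<Prod>i\<in>V - K. A i ((q \<circ> r) i)) = (\<Prod>i\<in>V - K. A i (r i))"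
    using q_fixes by (intro prod.cong) auto
  ultimately show ?thesis by (simp add: algebra_simps)
qed

lemma det_on_block:
  fixes A :: "'n \<Rightarrow> 'n \<Rightarrow> 'a::comm_ring_1"
  assumes fin: "finite V" and KV: "K \<subseteq> V"
    and invariant: "\<And>p. p permutes V \<Longrightarrow> (\<Prod>i\<in>V. A i (p i)) \<noteq> 0 \<Longrightarrow> p ` K \<subseteq> K"
  shows "det_on V A = det_on K A * det_on (V - K) A"
proof -
  have finK: "finite K" using fin KV by (rule finite_subset[rotated])
  let ?term = "\<lambda>p. of_int (sign p) * (\<Prod>i\<in>V. A i (p i)) :: 'a"
  let ?S = "{p. p permutes V \<and> p ` K \<subseteq> K}"
  have "det_on V A = sum ?term ?S"
    unfolding det_on_def
    by (rule sum.mono_neutral_right[OF finite_permutations[OF fin]]) (use invariant in fastforce)+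
  also have "\<dots> = (\<Sum>(q, r)\<in>{q. q permutes K} \<times> {r. r permutes (V - K)}.
      (of_int (sign q) * (\<Prod>i\<in>K. A i (q i))) * (of_int (sign r) * (\<Prod>i\<in>V - K. A i (r i))))"
  proof (rule sum.reindex_bij_witness[where i = "\<lambda>(q, r). q \<circ> r"
        and j = "\<lambda>p. (restrict_id p K, restrict_id p (V - K))"])
    fix p assume "p \<in> ?S"
    then have "p permutes V" "p ` K \<subseteq> K" by auto
    note split = permutes_split_invariant[OF this(1) finK KV this(2)]
    show "(\<lambda>(q, r). q \<circ> r) (restrict_id p K, restrict_id p (V - K)) = p"
      using split(3) by simp
    show "(restrict_id p K, restrict_id p (V - K)) \<in> {q. q permutes K} \<times> {r. r permutes (V - K)}"
      using split(1,2) by simp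
    show "(case (restrict_id p K, restrict_id p (V - K)) of (q, r) \<Rightarrow>
        of_int (sign q) * (\<Prod>i\<in>K. A i (q i)) * (of_int (sign r) * (\<Prod>i\<in>V - K. A i (r i)))) =
      ?term p"
      using det_term_compose_split[OF fin KV split(1,2), of A] split(3) by simp
  next
    fix qr assume "qr \<in> {q. q permutes K} \<times> {r. r permutes (V - K)}"
    then obtain q r where qr: "qr = (q, r)" "q permutes K" "r permutes (V - K)" by auto
    note comp = permutes_compose_split[OF qr(2,3) KV]
    show "(restrict_id ((\<lambda>(q, r). q \<circ> r) qr) K, restrict_id ((\<lambda>(q, r). q \<circ> r) qr) (V - K)) = qr"
      using comp(3,4) qr(1) by simp
    show "(\<lambda>(q, r). q \<circ> r) qr \<in> ?S"
      using comp(1,2) qr(1) by simp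
  qed
  also have "\<dots> = det_on K A * det_on (V - K) A"
    unfolding det_on_def sum_product sum.cartesian_product by (simp add: case_prod_beta)
  finally show ?thesis .
qed

section \<open>Path components and cycles of permutations\<close>

lemma rtrancl_restrict_scc:
  fixes R :: "'a rel" and a :: 'a
  defines "C \<equiv> {c. (a, c) \<in> R\<^sup>* \<and> (c, a) \<in> R\<^sup>*}"
  assumes "(x, y) \<in> R\<^sup>*" "(a, x) \<in> R\<^sup>*" "(y, a) \<in> R\<^sup>*"
  shows "(x, y) \<in> (R \<inter> C \<times> C)\<^sup>*"
  using assms(2,3)
proof (induction rule: converse_rtrancl_induct)
  case (step x x')
  have "(a, x') \<in> R\<^sup>*" using step.prems step.hyps(1) by (rule rtrancl_into_rtrancl)
  moreover have "(x', a) \<in> R\<^sup>*" using step.hyps(2) assms(4) by (rule rtrancl_trans)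
  ultimately have "x \<in> C" "x' \<in> C"
    using step.prems step.hyps(1) by (auto simp: C_def intro: converse_rtrancl_into_rtrancl)
  then show ?case
    using step.hyps(1) step.IH[OF \<open>(a, x') \<in> R\<^sup>*\<close>] by (blast intro: converse_rtrancl_into_rtrancl)
qed simp

lemma path_component_subset: "path_component E W K \<Longrightarrow> K \<subseteq> W"
  by (auto simp: path_component_def path_equiv_def)

lemma path_component_nonempty: "path_component E W K \<Longrightarrow> K \<noteq> {}"
  by (auto simp: path_component_def path_equiv_def)

lemma path_component_strongly_connected:
  assumes "path_component E W K" "x \<in> K" "y \<in> K"
  shows "(x, y) \<in> (E \<inter> K \<times> K)\<^sup>*"
proof -
  let ?R = "E \<inter> W \<times> W"
  obtain a where a: "a \<in> W" "K = {b. path_equiv E W a b}"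
    using assms(1) by (auto simp: path_component_def)
  let ?C = "{c. (a, c) \<in> ?R\<^sup>* \<and> (c, a) \<in> ?R\<^sup>*}"
  have "(a, x) \<in> ?R\<^sup>*" "(x, a) \<in> ?R\<^sup>*" "(a, y) \<in> ?R\<^sup>*" "(y, a) \<in> ?R\<^sup>*"
    using assms(2,3) a(2) by (auto simp: path_equiv_def)
  then have "(x, y) \<in> (?R \<inter> ?C \<times> ?C)\<^sup>*"
    by (intro rtrancl_restrict_scc) (auto intro: rtrancl_trans)
  also have "?R \<inter> ?C \<times> ?C = E \<inter> K \<times> K"
    using a by (auto simp: path_equiv_def)
  finally show ?thesis .
qed

lemma support_subset:
  assumes "p permutes V" "x \<in> V"
  shows "set (support p x) \<subseteq> V"
  using permutes_in_funpow_image[OF assms] by auto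

lemma self_in_support:
  assumes "permutation p"
  shows "x \<in> set (support p x)"
  unfolding support_set[OF assms] by (rule range_eqI[where x = 0]) simp

lemma support_last:
  assumes "permutation p"
  shows "p (last (support p x)) = x"
proof -
  let ?n = "least_power p x"
  have "?n > 0" using least_power_of_permutation(2)[OF assms] .
  then have "last (support p x) = (p ^^ (?n - 1)) x"
    by (simp add: last_conv_nth)
  then show ?thesis
    using least_power_of_permutation(1)[OF assms, of x] \<open>?n > 0\<close>
    by (metis Suc_diff_1 comp_apply funpow.simps(2))
qed

lemma support_preimage_closed:
  assumes p: "permutation p" and "p y \<in> set (support p x)"
  shows "y \<in> set (support p x)"
proof -
  let ?n = "least_power p x"
  obtain k where k: "p y = (p ^^ k) x" using assms(2) by (auto simp: support_set[OF p])
  have "p ((p ^^ (k + ?n - 1)) x) = (p ^^ (k + ?n)) x"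
    using least_power_of_permutation(2)[OF p, of x]
    by (metis Suc_diff_1 add_gr_0 comp_apply funpow.simps(2))
  also have "\<dots> = p y"
    using least_power_of_permutation(1)[OF p, of x] k by (simp add: funpow_add)
  finally have y: "y = (p ^^ (k + ?n - 1)) x"
    using permutation_bijective[OF p] by (metis bij_pointE)
  show ?thesis unfolding support_set[OF p] y by (rule rangeI)
qed

lemma simple_path_rev_support:
  assumes p: "permutation p"
    and arrows: "\<And>y. y \<in> set (support p x) \<Longrightarrow> p y \<noteq> x \<Longrightarrow> p y = y \<or> (p y, y) \<in> E"
  shows "simple_path E (last (support p x)) x (rev (support p x))"
proof -
  let ?L = "support p x"
  let ?n = "length ?L"
  have n: "?n > 0" using least_power_of_permutation(2)[OF p] by simp
  have dist: "distinct ?L" using cycle_of_permutation[OF p] .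
  have edges: "(rev ?L ! k, rev ?L ! Suc k) \<in> E" if k: "Suc k < ?n" for k
  proof -
    define j where "j = ?n - Suc (Suc k)"
    have j: "Suc j < ?n" "?n - Suc k = Suc j" using k by (auto simp: j_def)
    let ?y = "?L ! j"
    have py: "p ?y = ?L ! Suc j" using j(1) by simp
    have "?L ! Suc j \<noteq> ?L ! 0" "?L ! Suc j \<noteq> ?L ! j"
      by (simp_all only: nth_eq_iff_index_eq[OF dist] j(1) n Suc_lessD)
    moreover have "?L ! 0 = x" using n by simp
    ultimately have "p ?y \<noteq> x" "p ?y \<noteq> ?y"
      unfolding py by simp_all
    then have "(p ?y, ?y) \<in> E"
      using arrows[of ?y] j(1) by auto
    then show ?thesis
      using k j by (simp add: rev_nth py j_def)
  qed
  have "hd ?L = x"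
    using hd_conv_nth[of ?L] n by (simp del: length_map)
  then have ends: "rev ?L \<noteq> []" "hd (rev ?L) = last ?L" "last (rev ?L) = x"
    using n by (simp_all add: hd_rev last_rev)
  have "distinct (rev ?L)" using dist by (simp only: distinct_rev)
  with ends show ?thesis
    unfolding simple_path_def length_rev by (intro conjI allI impI edges)
qed

section \<open>Nonzero terms of the homeostasis determinant\<close>

lemma det_on_cong:
  assumes "\<And>i j. i \<in> K \<Longrightarrow> j \<in> K \<Longrightarrow> A i j = B i j"
  shows "det_on K A = det_on K B"
  unfolding det_on_def
  by (intro sum.cong prod.cong refl arg_cong2[where f = "(*)"]) (simp add: assms permutes_in_image)

lemma H_mat_term_nonzero:
  assumes "finite V" "(\<Prod>i\<in>V. H_mat E Inp out i (p i)) \<noteq> 0" "i \<in> V"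
  shows "p i = out \<Longrightarrow> i \<in> Inp" and "p i \<noteq> out \<Longrightarrow> p i = i \<or> (p i, i) \<in> E"
proof -
  have "H_mat E Inp out i (p i) \<noteq> 0"
  proof
    assume "H_mat E Inp out i (p i) = 0"
    then have "(\<Prod>i\<in>V. H_mat E Inp out i (p i)) = 0"
      using assms(1,3) by (auto intro!: prod_zero)
    with assms(2) show False ..
  qed
  then show "p i = out \<Longrightarrow> i \<in> Inp" and "p i \<noteq> out \<Longrightarrow> p i = i \<or> (p i, i) \<in> E"
    by (auto simp: H_mat_def jac_def split: if_splits)
qed

text \<open>Along an orbit of \<open>p\<close> the arrows \<open>p y \<rightarrow> y\<close> lead back from \<open>p x\<close> to \<open>x\<close>, and going once
  around the cycle leads from \<open>x\<close> to \<open>p x\<close>.\<close>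
lemma path_equiv_perm:
  assumes p: "permutation p" and closed: "\<And>y. y \<in> C \<Longrightarrow> p y \<in> C"
    and arrows: "\<And>y. y \<in> C \<Longrightarrow> p y = y \<or> (p y, y) \<in> E" and x: "x \<in> C"
  shows "path_equiv E C x (p x)"
proof -
  let ?R = "E \<inter> C \<times> C"
  have orbit_back: "(p ^^ k) y \<in> C \<and> ((p ^^ k) y, y) \<in> ?R\<^sup>*" if "y \<in> C" for y k
  proof (induction k)
    case (Suc k)
    let ?z = "(p ^^ k) y"
    have "(p ?z, ?z) \<in> ?R\<^sup>*" using arrows[of ?z] closed[of ?z] Suc by auto
    then show ?case using Suc closed by (auto intro: rtrancl_trans)
  qed (simp add: that)
  obtain n where "n > 0" "(p ^^ n) x = x" using permutation_self[OF p] by blast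
  have "(p ^^ (n - 1)) (p x) = (p ^^ Suc (n - 1)) x"
    by (simp only: funpow_Suc_right comp_apply)
  then have "(p ^^ (n - 1)) (p x) = x" using \<open>n > 0\<close> \<open>(p ^^ n) x = x\<close> by simp
  then have "(x, p x) \<in> ?R\<^sup>*" using orbit_back[of "p x" "n - 1"] closed x by simp
  moreover have "(p x, x) \<in> ?R\<^sup>*" using orbit_back[of x 1] x by simp
  ultimately show ?thesis using closed x by (simp add: path_equiv_def)
qed

lemma output_cycle_simple_path:
  assumes p: "p permutes V" and perm: "permutation p" and "out \<in> V"
    and input: "\<And>i. i \<in> V \<Longrightarrow> p i = out \<Longrightarrow> i \<in> Inp"
    and arrows: "\<And>i. i \<in> V \<Longrightarrow> p i \<noteq> out \<Longrightarrow> p i = i \<or> (p i, i) \<in> E"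
  shows "last (support p out) \<in> Inp" "simple_path E (last (support p out)) out (rev (support p out))"
proof -
  have sub: "set (support p out) \<subseteq> V" using support_subset[OF p \<open>out \<in> V\<close>] .
  have "last (support p out) \<in> set (support p out)"
    using self_in_support[OF perm] by (metis empty_iff empty_set last_in_set)
  then show "last (support p out) \<in> Inp"
    using input sub support_last[OF perm] by blast
  show "simple_path E (last (support p out)) out (rev (support p out))"
    using arrows sub by (intro simple_path_rev_support[OF perm]) blast
qed

lemma path_equiv_off_output_cycle:
  assumes p: "p permutes V" and perm: "permutation p"
    and arrows: "\<And>i. i \<in> V \<Longrightarrow> p i \<noteq> out \<Longrightarrow> p i = i \<or> (p i, i) \<in> E"
    and x: "x \<in> V - set (support p out)"
  shows "path_equiv E (V - set (support p out)) x (p x)"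
proof (rule path_equiv_perm[OF perm _ _ x])
  fix y assume y: "y \<in> V - set (support p out)"
  then show "p y \<in> V - set (support p out)"
    using support_preimage_closed[OF perm] permutes_in_image[OF p] by blast
  then have "p y \<noteq> out" using self_in_support[OF perm] by blast
  then show "p y = y \<or> (p y, y) \<in> E" using arrows y by blast
qed

lemma nonzero_term_preserves_component:
  assumes core: "core_network V E Inp out"
    and appendage: "K \<subseteq> abs_appendage_nodes V E Inp out"
    and b: "\<forall>i\<in>Inp. \<forall>S. simple_path E i out S \<longrightarrow>
              (\<forall>x\<in>K. \<forall>y \<in> compl_path V S - K. \<not> path_equiv E (compl_path V S) x y)"
    and p: "p permutes V"
    and nonzero: "(\<Prod>i\<in>V. H_mat E Inp out i (p i)) \<noteq> 0"
  shows "out \<notin> K \<and> p ` K \<subseteq> K"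
proof -
  have fin: "finite V" and out: "out \<in> V" using core by (auto simp: core_network_def)
  have perm: "permutation p" using p fin by (auto simp: permutation_permutes)
  note term_nonzero = H_mat_term_nonzero[OF fin nonzero]
  define L where "L = support p out"
  have input: "last L \<in> Inp" and path: "simple_path E (last L) out (rev L)"
    using output_cycle_simple_path[OF p perm out term_nonzero] by (simp_all add: L_def)
  have disjoint: "x \<notin> set L" if "x \<in> K" for x
  proof
    assume "x \<in> set L"
    then have "simple_node E (last L) out x" using path by (auto simp: simple_node_def)
    then show False
      using that appendage input by (auto simp: abs_appendage_nodes_def appendage_node_def)
  qed
  have "out \<in> set L" unfolding L_def by (rule self_in_support[OF perm])
  moreover have "p x \<in> K" if "x \<in> K" for x
  proof -
    have "x \<in> V - set L" using that disjoint appendage by (auto simp: abs_appendage_nodes_def)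
    then have "path_equiv E (compl_path V (rev L)) x (p x)"
      using path_equiv_off_output_cycle[OF p perm term_nonzero(2)] by (simp add: L_def compl_path_def)
    then show ?thesis using b input path that by (auto simp: path_equiv_def)
  qed
  ultimately show ?thesis using disjoint by blast
qed

lemma det_jac_dvd_det_H_mat:
  assumes core: "core_network V E Inp out"
    and appendage: "K \<subseteq> abs_appendage_nodes V E Inp out"
    and b: "\<forall>i\<in>Inp. \<forall>S. simple_path E i out S \<longrightarrow>
              (\<forall>x\<in>K. \<forall>y \<in> compl_path V S - K. \<not> path_equiv E (compl_path V S) x y)"
  shows "det_on K (jac E) dvd det_on V (H_mat E Inp out)"
proof (cases "out \<in> K")
  case True
  then have "(\<Prod>i\<in>V. H_mat E Inp out i (p i)) = 0" if "p permutes V" for p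
    using nonzero_term_preserves_component[OF core appendage b that] by blast
  then have "det_on V (H_mat E Inp out) = 0"
    unfolding det_on_def by (intro sum.neutral) simp
  then show ?thesis by simp
next
  case False
  have fin: "finite V" using core by (simp add: core_network_def)
  have KV: "K \<subseteq> V" using appendage by (auto simp: abs_appendage_nodes_def)
  have "det_on V (H_mat E Inp out) = det_on K (H_mat E Inp out) * det_on (V - K) (H_mat E Inp out)"
    by (rule det_on_block[OF fin KV]) (use nonzero_term_preserves_component[OF core appendage b] in blast)
  moreover have "det_on K (H_mat E Inp out) = det_on K (jac E)"
    using False by (intro det_on_cong) (auto simp: H_mat_def)
  ultimately show ?thesis by simp
qed

theorem theorem3p15:
  fixes V :: "'n::linorder set" and E :: "('n \<times> 'n) set" and Inp :: "'n set" and out :: 'n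
    and K :: "'n set"
  assumes core: "core_network V E Inp out"
    and a: "path_component E (abs_appendage_nodes V E Inp out) K"
    and b: "\<forall>i\<in>Inp. \<forall>S. simple_path E i out S \<longrightarrow>
              (\<forall>x\<in>K. \<forall>y \<in> compl_path V S - K. \<not> path_equiv E (compl_path V S) x y)"
  shows "irreducible (det_on K (jac E)) \<and> det_on K (jac E) dvd det_on V (H_mat E Inp out)"
proof
  have appendage: "K \<subseteq> abs_appendage_nodes V E Inp out" using path_component_subset[OF a] .
  have "finite V" using core by (simp add: core_network_def)
  moreover have "K \<subseteq> V" using appendage by (auto simp: abs_appendage_nodes_def)
  ultimately have "finite K" by (rule finite_subset[rotated])
  then show "irreducible (det_on K (jac E))"
    using irreducible_det_jac path_component_nonempty[OF a]
      path_component_strongly_connected[OF a] by blast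
  show "det_on K (jac E) dvd det_on V (H_mat E Inp out)"
    using det_jac_dvd_det_H_mat[OF core appendage b] .
qed

end
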